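(* Let $t\ge1$, $w\in\mathbb{R}^t_{++}$, $\rho>0$ and $d\in\mathbb{R}^t_{++}$. Let $d^w\in\mathbb{R}^t$ be given by $d^w_i:=d_i/w_i$, and let $\Pi$ be a permutation matrix such that $\Pi d^w$ is sorted in non-increasing order. Put $\tilde d=\Pi d$, $\tilde w=\Pi w$, and for $i=1,\dots,t$, $$s_i=\sum_{j=1}^i\tilde w_j\tilde d_j,\qquad L_i=\sum_{j=1}^i\tilde w_j^2,\qquad \alpha_i=\frac{s_i}{1+2\rho L_i},$$ and let $\bar\alpha=\max_{1\le i\le t}\alpha_i$. Then $$x(d):=\arg\min_{x\in\mathbb{R}^t_+}\Big\{\frac12\|x-d\|^2+\rho\|w\circ x\|_1^2\Big\}=(d-2\rho\bar\alpha w)^+ .$$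
   Context: $\circ$ is the Hadamard product; for a vector $z$, $z^+$ denotes the entrywise positive part $\max\{z_i,0\}$. *)

theory Defs
  imports "HOL-Analysis.Analysis"
begin

end

theory Submission
  imports Defs
begin

(* On the nonnegative orthant the objective is q x = |x - d|^2/2 + rho <w, x>^2.
   For any a, the point x = (d - 2 rho a w)^+ satisfies the variational inequality
   <x - d + 2 rho a w, y - x> >= 0 for every y >= 0, so if moreover <w, x> = a, the exact
   expansion of q around x gives q y >= q x + |y - x|^2/2 and x is the unique minimiser.
   It remains to verify the fixed-point equation <w, (d - 2 rho abar w)^+> = abar.
   Since d/w is sorted, the positive terms form a prefix, so the left side is the maximum
   over m of s_m - 2 rho abar L_m = abar + (1 + 2 rho L_m) (alpha_m - abar), and this
   maximum is abar because abar is the largest alpha_m. *)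

lemma quadratic_expansion:
  fixes d w x y :: "'a::real_inner" and rho :: real
  shows "(norm (y - d))\<^sup>2 / 2 + rho * (inner w y)\<^sup>2
       = (norm (x - d))\<^sup>2 / 2 + rho * (inner w x)\<^sup>2
         + inner (x - d + (2 * rho * inner w x) *\<^sub>R w) (y - x)
         + (norm (y - x))\<^sup>2 / 2 + rho * (inner w (y - x))\<^sup>2"
  unfolding power2_norm_eq_inner
  by (simp add: inner_diff_left inner_diff_right inner_add_left inner_add_right inner_commute
      power2_eq_square field_simps)

lemma pos_part_variational_ineq:
  fixes v y :: "real ^ 'n"
  assumes "\<forall>i. 0 \<le> y $ i"
  shows "0 \<le> inner ((\<chi> i. max (v $ i) 0) - v) (y - (\<chi> i. max (v $ i) 0))"
  unfolding inner_vec_def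
  by (rule sum_nonneg) (use assms in \<open>auto simp: max_def mult_nonpos_nonneg\<close>)

lemma orthant_minimizer_gap:
  fixes d w y :: "real ^ 'n" and rho a :: real
  defines "x \<equiv> \<chi> i. max (d $ i - 2 * rho * a * w $ i) 0"
  assumes "0 \<le> rho" and "inner w x = a" and "\<forall>i. 0 \<le> y $ i"
  shows "(norm (x - d))\<^sup>2 / 2 + rho * (inner w x)\<^sup>2 + (norm (y - x))\<^sup>2 / 2
       \<le> (norm (y - d))\<^sup>2 / 2 + rho * (inner w y)\<^sup>2"
proof -
  define v where "v = d - (2 * rho * a) *\<^sub>R w"
  have "x = (\<chi> i. max (v $ i) 0)"
    unfolding x_def v_def by (simp add: mult.assoc)
  then have "0 \<le> inner (x - v) (y - x)"
    using pos_part_variational_ineq assms(4) by metis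
  moreover have "x - v = x - d + (2 * rho * inner w x) *\<^sub>R w"
    unfolding v_def assms(3) by simp
  ultimately show ?thesis
    using quadratic_expansion[of y d rho w x] assms(2) by simp
qed

lemma orthant_minimizers_eq:
  fixes d w :: "real ^ 'n" and rho a :: real
  defines "x \<equiv> \<chi> i. max (d $ i - 2 * rho * a * w $ i) 0"
    and "q \<equiv> \<lambda>y. (norm (y - d))\<^sup>2 / 2 + rho * (inner w y)\<^sup>2"
  assumes "0 \<le> rho" and "inner w x = a"
  shows "{z. (\<forall>i. 0 \<le> z $ i) \<and> (\<forall>y. (\<forall>i. 0 \<le> y $ i) \<longrightarrow> q z \<le> q y)} = {x}"
proof -
  have gap: "q x + (norm (y - x))\<^sup>2 / 2 \<le> q y" if "\<forall>i. 0 \<le> y $ i" for y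
    using orthant_minimizer_gap[of rho w d a y] assms(3,4) that unfolding x_def q_def by simp
  have "\<forall>i. 0 \<le> x $ i"
    unfolding x_def by simp
  moreover have "q x \<le> q y" if "\<forall>i. 0 \<le> y $ i" for y
    using gap[OF that] zero_le_power2[of "norm (y - x)"] by linarith
  moreover have "z = x" if "\<forall>i. 0 \<le> z $ i" and "q z \<le> q x" for z
  proof -
    have "(norm (z - x))\<^sup>2 \<le> 0"
      using gap[OF that(1)] that(2) by linarith
    then show "z = x"
      by simp
  qed
  ultimately show ?thesis
    by (auto intro: order_antisym)
qed

lemma sum_pos_part_eq_Max_prefix_sums:
  fixes w d :: "nat \<Rightarrow> real" and c :: real
  assumes w_pos: "\<And>j. j \<in> {1..n} \<Longrightarrow> 0 < w j"
    and sorted: "\<And>i j. 1 \<le> i \<Longrightarrow> i \<le> j \<Longrightarrow> j \<le> n \<Longrightarrow> d j / w j \<le> d i / w i"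
  shows "(\<Sum>j=1..n. w j * max (d j - c * w j) 0)
       = Max ((\<lambda>m. \<Sum>j=1..m. w j * (d j - c * w j)) ` {0..n})"
proof -
  define P where "P = {j \<in> {1..n}. c * w j < d j}"
  define m where "m = Max (insert 0 P)"
  have "m \<le> n"
    unfolding m_def P_def by simp
  have prefix: "c * w j < d j \<longleftrightarrow> j \<le> m" if "j \<in> {1..n}" for j
  proof
    assume "c * w j < d j"
    then show "j \<le> m"
      using that unfolding m_def P_def by simp
  next
    assume "j \<le> m"
    then have "m \<in> P"
      using that Max_in[of "insert 0 P"] unfolding m_def P_def by fastforce
    then have "c < d m / w m"
      unfolding P_def by (simp add: pos_less_divide_eq w_pos)
    also have "d m / w m \<le> d j / w j"
      using sorted \<open>j \<le> m\<close> \<open>m \<le> n\<close> that by simp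
    finally show "c * w j < d j"
      using that by (simp add: pos_less_divide_eq w_pos)
  qed
  have "(\<Sum>j=1..n. w j * max (d j - c * w j) 0)
      = (\<Sum>j=1..n. if j \<le> m then w j * (d j - c * w j) else 0)"
  proof (rule sum.cong)
    fix j
    assume "j \<in> {1..n}"
    then show "w j * max (d j - c * w j) 0 = (if j \<le> m then w j * (d j - c * w j) else 0)"
      using prefix[of j] by auto
  qed simp
  also have "\<dots> = (\<Sum>j\<in>{1..n} \<inter> {..m}. w j * (d j - c * w j))"
    by (simp only: sum.inter_restrict finite_atLeastAtMost atMost_iff)
  also have "{1..n} \<inter> {..m} = {1..m}"
    using \<open>m \<le> n\<close> by auto
  finally have attained: "(\<Sum>j=1..n. w j * max (d j - c * w j) 0) = (\<Sum>j=1..m. w j * (d j - c * w j))" .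
  have bound: "(\<Sum>j=1..k. w j * (d j - c * w j)) \<le> (\<Sum>j=1..n. w j * max (d j - c * w j) 0)"
    if "k \<le> n" for k
  proof -
    have "(\<Sum>j=1..k. w j * (d j - c * w j)) \<le> (\<Sum>j=1..k. w j * max (d j - c * w j) 0)"
      by (rule sum_mono) (use that w_pos in \<open>auto intro: mult_left_mono\<close>)
    also have "\<dots> \<le> (\<Sum>j=1..n. w j * max (d j - c * w j) 0)"
    proof (rule sum_mono2)
      fix j
      assume "j \<in> {1..n} - {1..k}"
      then show "0 \<le> w j * max (d j - c * w j) 0"
        using w_pos[of j] by simp
    qed (use that in auto)
    finally show ?thesis .
  qed
  show ?thesis
    by (rule Max_eqI[symmetric]) (use bound attained \<open>m \<le> n\<close> in auto)
qed

lemma Max_prefix_ratio_fixed_point: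
  fixes w d :: "nat \<Rightarrow> real" and rho :: real
  assumes "1 \<le> n" and rho: "0 \<le> rho"
    and w_pos: "\<And>j. j \<in> {1..n} \<Longrightarrow> 0 < w j"
    and d_nonneg: "\<And>j. j \<in> {1..n} \<Longrightarrow> 0 \<le> d j"
    and sorted: "\<And>i j. 1 \<le> i \<Longrightarrow> i \<le> j \<Longrightarrow> j \<le> n \<Longrightarrow> d j / w j \<le> d i / w i"
  defines "alpha \<equiv> \<lambda>i. (\<Sum>j=1..i. w j * d j) / (1 + 2 * rho * (\<Sum>j=1..i. (w j)\<^sup>2))"
  defines "abar \<equiv> Max (alpha ` {1..n})"
  shows "(\<Sum>j=1..n. w j * max (d j - 2 * rho * abar * w j) 0) = abar"
proof -
  define c where "c = 2 * rho * abar"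
  have den_pos: "0 < 1 + 2 * rho * (\<Sum>j=1..m. (w j)\<^sup>2)" for m
    using rho by (simp add: add_pos_nonneg sum_nonneg)
  have prefix_sum: "(\<Sum>j=1..m. w j * (d j - c * w j))
      = abar + (1 + 2 * rho * (\<Sum>j=1..m. (w j)\<^sup>2)) * (alpha m - abar)" for m
    using den_pos[of m]
    by (simp add: alpha_def c_def right_diff_distrib sum_subtractf sum_distrib_left
        power2_eq_square field_simps)
  have alpha_le: "alpha m \<le> abar" if "m \<in> {0..n}" for m
  proof (cases "m = 0")
    case True
    have "alpha 1 \<le> abar"
      unfolding abar_def using \<open>1 \<le> n\<close> by (intro Max_ge) auto
    moreover have "0 \<le> alpha 1"
      unfolding alpha_def using w_pos[of 1] d_nonneg[of 1] den_pos[of 1] \<open>1 \<le> n\<close> by simp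
    ultimately show ?thesis
      using True unfolding alpha_def by simp
  next
    case False
    then show ?thesis
      unfolding abar_def using that by (intro Max_ge) auto
  qed
  obtain k where "k \<in> {1..n}" and "alpha k = abar"
    using Max_in[of "alpha ` {1..n}"] \<open>1 \<le> n\<close> unfolding abar_def by fastforce
  have "Max ((\<lambda>m. \<Sum>j=1..m. w j * (d j - c * w j)) ` {0..n}) = abar"
  proof (rule Max_eqI)
    fix y
    assume "y \<in> (\<lambda>m. \<Sum>j=1..m. w j * (d j - c * w j)) ` {0..n}"
    then show "y \<le> abar"
      using prefix_sum alpha_le den_pos
      by (auto simp: mult_nonneg_nonpos less_imp_le)
  next
    show "abar \<in> (\<lambda>m. \<Sum>j=1..m. w j * (d j - c * w j)) ` {0..n}"
      using \<open>k \<in> {1..n}\<close> \<open>alpha k = abar\<close> prefix_sum[of k] by force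
  qed simp
  then show ?thesis
    using sum_pos_part_eq_Max_prefix_sums[of n w d c] w_pos sorted unfolding c_def by simp
qed

theorem proposition3p3:
  fixes d w :: "real ^ 'n" and rho :: real and sigma :: "nat \<Rightarrow> 'n"
  assumes w_pos: "\<forall>i. w $ i > 0"
    and d_pos: "\<forall>i. d $ i > 0"
    and rho_pos: "rho > 0"
    and sigma_bij: "bij_betw sigma {1..CARD('n)} UNIV"
    and sorted: "\<forall>i j. 1 \<le> i \<and> i \<le> j \<and> j \<le> CARD('n) \<longrightarrow>
                   d $ sigma j / w $ sigma j \<le> d $ sigma i / w $ sigma i"
  defines "s \<equiv> \<lambda>i. \<Sum>j=1..i. w $ sigma j * d $ sigma j"
    and "L \<equiv> \<lambda>i. \<Sum>j=1..i. (w $ sigma j)\<^sup>2"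
  defines "alpha \<equiv> \<lambda>i. s i / (1 + 2 * rho * L i)"
  defines "abar \<equiv> Max (alpha ` {1..CARD('n)})"
  defines "F \<equiv> \<lambda>x::real ^ 'n. (1/2) * (norm (x - d))\<^sup>2 + rho * (\<Sum>i\<in>UNIV. \<bar>w $ i * x $ i\<bar>)\<^sup>2"
  shows "{x. (\<forall>i. 0 \<le> x $ i) \<and> (\<forall>y. (\<forall>i. 0 \<le> y $ i) \<longrightarrow> F x \<le> F y)}
           = {\<chi> i. max (d $ i - 2 * rho * abar * w $ i) 0}"
proof -
  define x where "x = (\<chi> i. max (d $ i - 2 * rho * abar * w $ i) 0)"
  have "(\<Sum>j=1..CARD('n). w $ sigma j * max (d $ sigma j - 2 * rho * abar * w $ sigma j) 0) = abar"
    using Max_prefix_ratio_fixed_point[of "CARD('n)" rho "\<lambda>j. w $ sigma j" "\<lambda>j. d $ sigma j"]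
      w_pos d_pos rho_pos sorted
    unfolding abar_def alpha_def s_def L_def by (simp add: less_imp_le Suc_leI)
  then have fixed: "inner w x = abar"
    using sum.reindex_bij_betw[OF sigma_bij, of "\<lambda>i. w $ i * x $ i"]
    unfolding inner_vec_def x_def by simp
  have F_eq: "F y = (norm (y - d))\<^sup>2 / 2 + rho * (inner w y)\<^sup>2" if "\<forall>i. 0 \<le> y $ i" for y
  proof -
    have "(\<Sum>i\<in>UNIV. \<bar>w $ i * y $ i\<bar>) = inner w y"
      unfolding inner_vec_def using that w_pos by (intro sum.cong) (auto simp: less_imp_le)
    then show ?thesis
      unfolding F_def by simp
  qed
  show ?thesis
    using orthant_minimizers_eq[of rho w d abar] rho_pos fixed F_eq unfolding x_def
    by (simp add: less_imp_le cong: conj_cong)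
qed

end
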